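(* Let $S$ be a graded reduced affine monoid and $\tilde S$ as in the context. Suppose $\alpha,\beta\in\mathbb{N}_0^{\mathcal{A}(\tilde S)}$ satisfy $\kappa(\alpha)=\kappa(\beta)$ and $\delta(\alpha)=\delta(\beta)$. Then $x^{\alpha}\sim x^{\beta}$, where $\sim$ is the semigroup congruence on the free commutative monoid $\tilde M=\{x^{\alpha}\mid\alpha\in\mathbb{N}_0^{\mathcal{A}(\tilde S)}\}$ generated by $\{(x_{a[k]}x_{b[l]},\,x_{a[k+1]}x_{b[l-1]})\mid a,b\in\mathcal{A}(S),\ 0\le k\le|a|-1,\ 1\le l\le|b|\}$.
   Context: A monoid is a commutative cancellative semigroup with identity; affine means a finitely generated submonoid of a finitely generated free abelian group; reduced means the identity is the only unit. $S$ (written multiplicatively) is graded: $S=\bigsqcup_{d\in\mathbb{N}_0}S_d$ with $S_dS_e\subseteq S_{d+e}$, and $|s|=d$ for $s\in S_d$ (not necessarily connected). $\mathcal{A}(S)$ is the set of atoms of $S$. Define $\tilde S=\{s[i]\mid s\in S,\ 0\le i\le|s|\}$ with multiplication $s[i]\cdot t[j]=(st)[i+j]$ (a submonoid of $S\times\mathbb{N}_0$); its atoms are $\mathcal{A}(\tilde S)=\{a[i]\mid a\in\mathcal{A}(S),\ 0\le i\le|a|\}$. $\tilde M$ is the free commutative monoid on indeterminates $x_{a[i]}$, $a[i]\in\mathcal{A}(\tilde S)$, with $x^{\alpha}=\prod x_{a[i]}^{\alpha(a[i])}$. Define $\kappa:\mathbb{N}_0^{\mathcal{A}(\tilde S)}\to\mathbb{N}_0^{\mathcal{A}(S)}$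 by $\kappa(\lambda)(a)=\sum_{i=0}^{|a|}\lambda(a[i])$, and $\delta:\mathbb{N}_0^{\mathcal{A}(\tilde S)}\to\mathbb{N}_0$ by $\delta(\lambda)=\sum_{a[i]\in\mathcal{A}(\tilde S)}i\,\lambda(a[i])$. *)

theory Defs
  imports "HOL-Library.Multiset" "HOL-Library.Function_Algebras" "HOL-Library.Product_Plus"
begin

text \<open>Monoids are written additively here (the paper writes them multiplicatively).
  The ambient finitely generated free abelian group is \<open>'d \<Rightarrow> int\<close> with \<open>'d\<close> finite.\<close>

definition is_submonoid :: "'a::comm_monoid_add set \<Rightarrow> bool" where
  "is_submonoid M \<longleftrightarrow> 0 \<in> M \<and> (\<forall>s\<in>M. \<forall>t\<in>M. s + t \<in> M)"

definition is_unit_in :: "'a::comm_monoid_add set \<Rightarrow> 'a \<Rightarrow> bool" where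
  "is_unit_in M u \<longleftrightarrow> u \<in> M \<and> (\<exists>v\<in>M. u + v = 0)"

definition atoms :: "'a::comm_monoid_add set \<Rightarrow> 'a set" where
  "atoms M = {a \<in> M. \<not> is_unit_in M a \<and>
       (\<forall>s\<in>M. \<forall>t\<in>M. a = s + t \<longrightarrow> is_unit_in M s \<or> is_unit_in M t)}"

definition affine_monoid :: "('d::finite \<Rightarrow> int) set \<Rightarrow> bool" where
  "affine_monoid S \<longleftrightarrow> is_submonoid S \<and>
     (\<exists>G. finite G \<and> G \<subseteq> S \<and> S = {sum_mset X | X. set_mset X \<subseteq> G})"

definition reduced :: "'a::comm_monoid_add set \<Rightarrow> bool" where
  "reduced M \<longleftrightarrow> (\<forall>u. is_unit_in M u \<longrightarrow> u = 0)"

text \<open>Grading \<open>S = \<Union>d S_d\<close>, \<open>S_d S_e \<subseteq> S_{d+e}\<close>, given by the degree map \<open>|_|\<close>.\<close>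
definition graded :: "'a::comm_monoid_add set \<Rightarrow> ('a \<Rightarrow> nat) \<Rightarrow> bool" where
  "graded S deg \<longleftrightarrow> (\<forall>s\<in>S. \<forall>t\<in>S. deg (s + t) = deg s + deg t)"

text \<open>\<open>\<tilde>S = {s[i] | s \<in> S, 0 \<le> i \<le> |s|}\<close> as a submonoid of \<open>S \<times> \<nat>\<^sub>0\<close>; \<open>s[i]\<close> is the pair \<open>(s,i)\<close>.\<close>
definition tildeS :: "'a::comm_monoid_add set \<Rightarrow> ('a \<Rightarrow> nat) \<Rightarrow> ('a \<times> nat) set" where
  "tildeS S deg = {(s, i) | s i. s \<in> S \<and> i \<le> deg s}"

text \<open>Exponent vectors in \<open>\<nat>\<^sub>0^{\<A>(\<tilde>S)}\<close> are multisets over \<open>\<A>(\<tilde>S)\<close>;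
  the multiset \<open>\<alpha>\<close> is the monomial \<open>x^\<alpha>\<close> of the free commutative monoid \<open>\<tilde>M\<close>.\<close>
definition kappa :: "('a \<Rightarrow> nat) \<Rightarrow> ('a \<times> nat) multiset \<Rightarrow> 'a \<Rightarrow> nat" where
  "kappa deg lam a = (\<Sum>i\<le>deg a. count lam (a, i))"

definition delta :: "('a \<times> nat) multiset \<Rightarrow> nat" where
  "delta lam = (\<Sum>p\<in>set_mset lam. snd p * count lam p)"

definition gens :: "'a::comm_monoid_add set \<Rightarrow> ('a \<Rightarrow> nat)
     \<Rightarrow> (('a \<times> nat) multiset \<times> ('a \<times> nat) multiset) set" where
  "gens S deg = {({#(a, k), (b, l)#}, {#(a, k + 1), (b, l - 1)#}) | a b k l.
      a \<in> atoms S \<and> b \<in> atoms S \<and> k + 1 \<le> deg a \<and> 1 \<le> l \<and> l \<le> deg b}"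

inductive mcong :: "'b set \<Rightarrow> ('b multiset \<times> 'b multiset) set
     \<Rightarrow> 'b multiset \<Rightarrow> 'b multiset \<Rightarrow> bool" for A R where
  base: "(u, v) \<in> R \<Longrightarrow> mcong A R u v"
| refl: "set_mset u \<subseteq> A \<Longrightarrow> mcong A R u u"
| sym: "mcong A R u v \<Longrightarrow> mcong A R v u"
| trans: "mcong A R u v \<Longrightarrow> mcong A R v w \<Longrightarrow> mcong A R u w"
| add: "mcong A R u v \<Longrightarrow> set_mset w \<subseteq> A \<Longrightarrow> mcong A R (u + w) (v + w)"

end

theory Submission
  imports Defs
begin

text \<open>The atoms of \<open>\<tilde>S\<close> are the letters \<open>a[i]\<close> with \<open>a\<close> an atom of \<open>S\<close> and
  \<open>0 \<le> i \<le> |a|\<close>, so \<open>\<kappa>\<close> counts the underlying atoms and \<open>\<delta>\<close> is the total index, while a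
  generating pair moves one unit of index from a letter \<open>b[l]\<close> to a letter \<open>a[k]\<close>.
  Match a letter \<open>a[i]\<close> of \<open>\<alpha>\<close> with a letter \<open>a[j]\<close> of \<open>\<beta>\<close>, say \<open>i \<le> j\<close>. As \<open>\<delta>(\<alpha>) = \<delta>(\<beta>)\<close>,
  the other letters of \<open>\<alpha>\<close> carry total index at least \<open>j - i\<close>, which can be moved onto
  \<open>a[i]\<close> one unit at a time. The remainders then have one letter fewer and equal \<open>\<kappa>\<close> and
  \<open>\<delta>\<close>, so induction on the number of letters finishes the proof.\<close>

lemma delta_eq_sum_mset_snd: "delta \<gamma> = (\<Sum>p\<in>#\<gamma>. snd p)"
proof (induction \<gamma>)
  case (add x M)
  have "delta (add_mset x M) =
      (\<Sum>p\<in>insert x (set_mset M). snd p * count M p + (if p = x then snd p else 0))"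
    unfolding delta_def by (intro sum.cong) auto
  also have "\<dots> = delta M + snd x"
    unfolding delta_def by (simp add: sum.distrib sum.insert_if not_in_iff)
  finally show ?case using add by simp
qed (simp add: delta_def)

lemma kappa_eq_count_image_fst:
  assumes "set_mset \<gamma> \<subseteq> {(a, i). i \<le> deg a}"
  shows "kappa deg \<gamma> a = count (image_mset fst \<gamma>) a"
  using assms
proof (induction \<gamma>)
  case (add x M)
  have "kappa deg (add_mset x M) a = kappa deg M a + (\<Sum>i\<le>deg a. if x = (a, i) then 1 else 0)"
    unfolding kappa_def sum.distrib[symmetric] by (intro sum.cong) auto
  then show ?case using add by (auto simp: sum.delta split: prod.splits)
qed (simp add: kappa_def)

lemma graded_deg_zero: "graded S deg \<Longrightarrow> 0 \<in> S \<Longrightarrow> deg 0 = 0"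
  unfolding graded_def by (metis add.right_neutral add_cancel_right_right)

lemma is_unit_in_reduced_iff: "reduced S \<Longrightarrow> 0 \<in> S \<Longrightarrow> is_unit_in S u \<longleftrightarrow> u = 0"
  unfolding reduced_def is_unit_in_def by auto

lemma is_unit_in_tildeS_iff:
  assumes "reduced S" "graded S deg" "0 \<in> S"
  shows "is_unit_in (tildeS S deg) p \<longleftrightarrow> p = 0"
proof
  assume "is_unit_in (tildeS S deg) p"
  then obtain s i t where "p = (s, i)" "s \<in> S" "t \<in> S" "s + t = 0" "i = 0"
    unfolding is_unit_in_def tildeS_def zero_prod_def by auto
  then show "p = 0"
    using is_unit_in_reduced_iff[OF assms(1,3)] unfolding is_unit_in_def zero_prod_def by auto
next
  assume "p = 0"
  then show "is_unit_in (tildeS S deg) p"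
    using assms(3) graded_deg_zero[OF assms(2,3)]
    unfolding is_unit_in_def tildeS_def zero_prod_def by auto
qed

definition indexed_atoms :: "'a::comm_monoid_add set \<Rightarrow> ('a \<Rightarrow> nat) \<Rightarrow> ('a \<times> nat) set" where
  "indexed_atoms S deg = {(a, i). a \<in> atoms S \<and> i \<le> deg a}"

lemma atoms_tildeS:
  assumes "reduced S" "graded S deg" "0 \<in> S"
  shows "atoms (tildeS S deg) = indexed_atoms S deg"
proof (intro set_eqI iffI)
  note unit_S = is_unit_in_reduced_iff[OF assms(1,3)]
  note unit_tildeS = is_unit_in_tildeS_iff[OF assms]
  note deg_zero = graded_deg_zero[OF assms(2,3)]
  fix p
  assume p: "p \<in> atoms (tildeS S deg)"
  then obtain s i where si: "p = (s, i)" "s \<in> S" "i \<le> deg s"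
    unfolding atoms_def tildeS_def by auto
  have "s \<noteq> 0"
    using p si deg_zero unit_tildeS unfolding atoms_def zero_prod_def by auto
  have "s \<in> atoms S" unfolding atoms_def
  proof (intro CollectI conjI ballI impI)
    show "s \<in> S" "\<not> is_unit_in S s" using si \<open>s \<noteq> 0\<close> unit_S by auto
    fix t u
    assume tu: "t \<in> S" "u \<in> S" "s = t + u"
    then have "deg s = deg t + deg u" using assms(2) unfolding graded_def by auto
    then have "(t, min i (deg t)) \<in> tildeS S deg" "(u, i - min i (deg t)) \<in> tildeS S deg"
              "p = (t, min i (deg t)) + (u, i - min i (deg t))"
      unfolding tildeS_def using tu si by auto
    then show "is_unit_in S t \<or> is_unit_in S u"
      using p unit_S unit_tildeS unfolding atoms_def zero_prod_def by blast
  qed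
  then show "p \<in> indexed_atoms S deg" using si unfolding indexed_atoms_def by auto
next
  note unit_S = is_unit_in_reduced_iff[OF assms(1,3)]
  note unit_tildeS = is_unit_in_tildeS_iff[OF assms]
  fix p
  assume "p \<in> indexed_atoms S deg"
  then obtain a i where ai: "p = (a, i)" "a \<in> atoms S" "i \<le> deg a"
    unfolding indexed_atoms_def by auto
  then have "a \<in> S" "a \<noteq> 0" using unit_S unfolding atoms_def by auto
  show "p \<in> atoms (tildeS S deg)" unfolding atoms_def
  proof (intro CollectI conjI ballI impI)
    show "p \<in> tildeS S deg" "\<not> is_unit_in (tildeS S deg) p"
      using ai \<open>a \<in> S\<close> \<open>a \<noteq> 0\<close> unit_tildeS unfolding tildeS_def zero_prod_def by auto
    fix x y
    assume xy: "x \<in> tildeS S deg" "y \<in> tildeS S deg" "p = x + y"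
    then have "fst x \<in> S" "fst y \<in> S" "a = fst x + fst y" "snd x \<le> deg (fst x)" "snd y \<le> deg (fst y)"
      using ai unfolding tildeS_def by auto
    moreover have "fst x = 0 \<or> fst y = 0"
      using ai(2) \<open>a = fst x + fst y\<close> \<open>fst x \<in> S\<close> \<open>fst y \<in> S\<close> unit_S
      unfolding atoms_def by auto
    ultimately have "x = 0 \<or> y = 0"
      using graded_deg_zero[OF assms(2,3)] by (auto simp: prod_eq_iff)
    then show "is_unit_in (tildeS S deg) x \<or> is_unit_in (tildeS S deg) y"
      using unit_tildeS by (auto simp: prod_eq_iff)
  qed
qed

lemma mcong_add_mset: "mcong A R u v \<Longrightarrow> x \<in> A \<Longrightarrow> mcong A R (add_mset x u) (add_mset x v)"
  using mcong.add[of A R u v "{#x#}"] by simp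

context
  fixes S :: "'a::comm_monoid_add set" and deg :: "'a \<Rightarrow> nat"
begin

abbreviation shift_cong :: "('a \<times> nat) multiset \<Rightarrow> ('a \<times> nat) multiset \<Rightarrow> bool" where
  "shift_cong \<equiv> mcong (indexed_atoms S deg) (gens S deg)"

lemma shift_cong_move_unit:
  assumes "a \<in> atoms S" "i < deg a" "(b, l) \<in> indexed_atoms S deg" "0 < l"
    and "set_mset \<alpha> \<subseteq> indexed_atoms S deg"
  shows "shift_cong (add_mset (a, i) (add_mset (b, l) \<alpha>)) (add_mset (a, Suc i) (add_mset (b, l - 1) \<alpha>))"
proof -
  have "({#(a, i), (b, l)#}, {#(a, Suc i), (b, l - 1)#}) \<in> gens S deg"
    using assms unfolding gens_def indexed_atoms_def by fastforce
  then have "shift_cong ({#(a, i), (b, l)#} + \<alpha>) ({#(a, Suc i), (b, l - 1)#} + \<alpha>)"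
    using assms(5) by (intro mcong.add mcong.base)
  then show ?thesis by simp
qed

lemma shift_cong_raise_index:
  assumes "a \<in> atoms S" "i + k \<le> deg a" "set_mset \<alpha> \<subseteq> indexed_atoms S deg"
    and "k \<le> (\<Sum>p\<in>#\<alpha>. snd p)"
  shows "\<exists>\<alpha>'. set_mset \<alpha>' \<subseteq> indexed_atoms S deg \<and> image_mset fst \<alpha>' = image_mset fst \<alpha>
           \<and> (\<Sum>p\<in>#\<alpha>'. snd p) + k = (\<Sum>p\<in>#\<alpha>. snd p)
           \<and> shift_cong (add_mset (a, i) \<alpha>) (add_mset (a, i + k) \<alpha>')"
  using assms(2-4)
proof (induction k arbitrary: i \<alpha>)
  case 0
  have "set_mset (add_mset (a, i) \<alpha>) \<subseteq> indexed_atoms S deg"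
    using assms(1) 0 unfolding indexed_atoms_def by auto
  then have "shift_cong (add_mset (a, i) \<alpha>) (add_mset (a, i) \<alpha>)" by (rule mcong.refl)
  then show ?case using 0 by auto
next
  case (Suc k)
  then have "(\<Sum>p\<in>#\<alpha>. snd p) \<noteq> 0" by linarith
  then obtain b l where "(b, l) \<in># \<alpha>" "0 < l" by auto
  then obtain \<alpha>\<^sub>0 where \<alpha>: "\<alpha> = add_mset (b, l) \<alpha>\<^sub>0" and "0 < l"
    by (metis multi_member_split)
  define \<alpha>\<^sub>1 where "\<alpha>\<^sub>1 = add_mset (b, l - 1) \<alpha>\<^sub>0"
  have step: "shift_cong (add_mset (a, i) \<alpha>) (add_mset (a, Suc i) \<alpha>\<^sub>1)"
    unfolding \<alpha>\<^sub>1_def \<alpha> using assms(1) Suc.prems \<open>0 < l\<close>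
    by (intro shift_cong_move_unit) (auto simp: \<alpha>)
  have "set_mset \<alpha>\<^sub>1 \<subseteq> indexed_atoms S deg"
    using Suc.prems(2) unfolding \<alpha>\<^sub>1_def \<alpha> indexed_atoms_def by auto
  moreover have "image_mset fst \<alpha>\<^sub>1 = image_mset fst \<alpha>" "(\<Sum>p\<in>#\<alpha>\<^sub>1. snd p) + 1 = (\<Sum>p\<in>#\<alpha>. snd p)"
    unfolding \<alpha>\<^sub>1_def \<alpha> using \<open>0 < l\<close> by simp_all
  ultimately obtain \<alpha>' where "set_mset \<alpha>' \<subseteq> indexed_atoms S deg"
      "image_mset fst \<alpha>' = image_mset fst \<alpha>" "(\<Sum>p\<in>#\<alpha>'. snd p) + Suc k = (\<Sum>p\<in>#\<alpha>. snd p)"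
      "shift_cong (add_mset (a, Suc i) \<alpha>\<^sub>1) (add_mset (a, Suc i + k) \<alpha>')"
    using Suc.IH[of "Suc i" \<alpha>\<^sub>1] Suc.prems by auto
  then show ?case using mcong.trans[OF step] by auto
qed

lemma shift_cong_align_letter:
  assumes "a \<in> atoms S" "i \<le> j" "j \<le> deg a"
    and "set_mset \<alpha> \<subseteq> indexed_atoms S deg" "image_mset fst \<alpha> = image_mset fst \<beta>"
    and "(\<Sum>p\<in>#\<alpha>. snd p) + i = (\<Sum>p\<in>#\<beta>. snd p) + j"
  obtains \<alpha>' where "set_mset \<alpha>' \<subseteq> indexed_atoms S deg" "image_mset fst \<alpha>' = image_mset fst \<beta>"
    "(\<Sum>p\<in>#\<alpha>'. snd p) = (\<Sum>p\<in>#\<beta>. snd p)" "shift_cong (add_mset (a, i) \<alpha>) (add_mset (a, j) \<alpha>')"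
proof -
  have "i + (j - i) \<le> deg a" "j - i \<le> (\<Sum>p\<in>#\<alpha>. snd p)" using assms(2,3,6) by linarith+
  from shift_cong_raise_index[OF assms(1) this(1) assms(4) this(2)] obtain \<alpha>' where
    "set_mset \<alpha>' \<subseteq> indexed_atoms S deg" "image_mset fst \<alpha>' = image_mset fst \<alpha>"
    "(\<Sum>p\<in>#\<alpha>'. snd p) + (j - i) = (\<Sum>p\<in>#\<alpha>. snd p)"
    "shift_cong (add_mset (a, i) \<alpha>) (add_mset (a, i + (j - i)) \<alpha>')"
    by blast
  then show thesis using that assms(2,5,6) by auto
qed

lemma shift_cong_if_same_atoms_and_index_sum:
  assumes "set_mset \<alpha> \<subseteq> indexed_atoms S deg" "set_mset \<beta> \<subseteq> indexed_atoms S deg"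
    and "image_mset fst \<alpha> = image_mset fst \<beta>" "(\<Sum>p\<in>#\<alpha>. snd p) = (\<Sum>p\<in>#\<beta>. snd p)"
  shows "shift_cong \<alpha> \<beta>"
  using assms
proof (induction "size \<alpha>" arbitrary: \<alpha> \<beta> rule: less_induct)
  case less
  show ?case
  proof (cases "\<alpha> = {#}")
    case True
    then show ?thesis using less.prems(3) by (auto intro: mcong.refl)
  next
    case False
    then obtain a i \<alpha>\<^sub>0 where \<alpha>: "\<alpha> = add_mset (a, i) \<alpha>\<^sub>0"
      by (metis multiset_cases surj_pair)
    then have "a \<in># image_mset fst \<beta>"
      using less.prems(3) by (metis fst_conv image_mset_add_mset union_single_eq_member)
    then obtain j \<beta>\<^sub>0 where \<beta>: "\<beta> = add_mset (a, j) \<beta>\<^sub>0"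
      by (metis (no_types, lifting) imageE insert_DiffM prod.collapse set_image_mset)
    have atoms: "set_mset \<alpha>\<^sub>0 \<subseteq> indexed_atoms S deg" "set_mset \<beta>\<^sub>0 \<subseteq> indexed_atoms S deg"
        "a \<in> atoms S" "i \<le> deg a" "j \<le> deg a"
      using less.prems(1,2) unfolding \<alpha> \<beta> indexed_atoms_def by auto
    have fst: "image_mset fst \<alpha>\<^sub>0 = image_mset fst \<beta>\<^sub>0" and
      snd: "(\<Sum>p\<in>#\<alpha>\<^sub>0. snd p) + i = (\<Sum>p\<in>#\<beta>\<^sub>0. snd p) + j"
      using less.prems(3,4) unfolding \<alpha> \<beta> by auto
    have size: "size \<alpha>\<^sub>0 < size \<alpha>" "size \<beta>\<^sub>0 < size \<alpha>"
      using fst unfolding \<alpha> by (auto dest: arg_cong[of _ _ size])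
    show ?thesis
    proof (cases "i \<le> j")
      case True
      obtain \<alpha>' where \<alpha>': "set_mset \<alpha>' \<subseteq> indexed_atoms S deg"
          "image_mset fst \<alpha>' = image_mset fst \<beta>\<^sub>0" "(\<Sum>p\<in>#\<alpha>'. snd p) = (\<Sum>p\<in>#\<beta>\<^sub>0. snd p)"
          "shift_cong (add_mset (a, i) \<alpha>\<^sub>0) (add_mset (a, j) \<alpha>')"
        using shift_cong_align_letter[OF atoms(3) True atoms(5) atoms(1) fst snd] by blast
      have "size \<alpha>' < size \<alpha>" using size(2) \<alpha>'(2) by (metis size_image_mset)
      then have "shift_cong \<alpha>' \<beta>\<^sub>0" using less.hyps[OF _ \<alpha>'(1) atoms(2)] \<alpha>'(2,3) by simp
      then have "shift_cong (add_mset (a, j) \<alpha>') \<beta>"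
        unfolding \<beta> using atoms by (intro mcong_add_mset) (auto simp: indexed_atoms_def)
      with \<alpha>'(4) show ?thesis unfolding \<alpha> by (rule mcong.trans)
    next
      case False
      then have "j \<le> i" by simp
      then obtain \<beta>' where \<beta>': "set_mset \<beta>' \<subseteq> indexed_atoms S deg"
          "image_mset fst \<beta>' = image_mset fst \<alpha>\<^sub>0" "(\<Sum>p\<in>#\<beta>'. snd p) = (\<Sum>p\<in>#\<alpha>\<^sub>0. snd p)"
          "shift_cong (add_mset (a, j) \<beta>\<^sub>0) (add_mset (a, i) \<beta>')"
        using shift_cong_align_letter[OF atoms(3) _ atoms(4) atoms(2) fst[symmetric] snd[symmetric]]
        by blast
      have "shift_cong \<alpha>\<^sub>0 \<beta>'" using less.hyps[OF size(1) atoms(1) \<beta>'(1)] \<beta>'(2,3) by simp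
      then have "shift_cong \<alpha> (add_mset (a, i) \<beta>')"
        unfolding \<alpha> using atoms by (intro mcong_add_mset) (auto simp: indexed_atoms_def)
      with \<beta>'(4) show ?thesis unfolding \<beta> by (blast intro: mcong.trans mcong.sym)
    qed
  qed
qed

end

theorem lemma4p2:
  fixes S :: "('d::finite \<Rightarrow> int) set"
    and deg :: "('d \<Rightarrow> int) \<Rightarrow> nat"
    and \<alpha> \<beta> :: "(('d \<Rightarrow> int) \<times> nat) multiset"
  assumes "affine_monoid S" and "reduced S" and "graded S deg"
    and "set_mset \<alpha> \<subseteq> atoms (tildeS S deg)"
    and "set_mset \<beta> \<subseteq> atoms (tildeS S deg)"
    and "\<forall>a\<in>atoms S. kappa deg \<alpha> a = kappa deg \<beta> a"
    and "delta \<alpha> = delta \<beta>"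
  shows "mcong (atoms (tildeS S deg)) (gens S deg) \<alpha> \<beta>"
proof -
  have "0 \<in> S" using assms(1) unfolding affine_monoid_def is_submonoid_def by auto
  have atoms: "atoms (tildeS S deg) = indexed_atoms S deg"
    using assms(2,3) \<open>0 \<in> S\<close> by (rule atoms_tildeS)
  have bounded: "set_mset \<gamma> \<subseteq> {(a, i). i \<le> deg a}" if "set_mset \<gamma> \<subseteq> indexed_atoms S deg" for \<gamma>
    using that unfolding indexed_atoms_def by auto
  have "count (image_mset fst \<alpha>) a = count (image_mset fst \<beta>) a" for a
  proof (cases "a \<in> atoms S")
    case True
    then show ?thesis
      using assms(4-6) atoms kappa_eq_count_image_fst[OF bounded] by metis
  next
    case False
    then have "a \<notin># image_mset fst \<alpha>" "a \<notin># image_mset fst \<beta>"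
      using assms(4,5) atoms unfolding indexed_atoms_def by auto
    then show ?thesis by (metis count_eq_zero_iff)
  qed
  then show ?thesis
    using assms(4,5,7) atoms shift_cong_if_same_atoms_and_index_sum
    by (metis multiset_eqI delta_eq_sum_mset_snd)
qed

end
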